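(* Fix a single machine with nonnegative real parameters $k^A,k^B,t^A,t^B$ and a real bound $L$. For integers $a,b\ge 0$ let $f(a,b)$ be the minimum processing time for this machine to process $a$ A-jobs and $b$ B-jobs (as defined in the context). Then for every fixed integer $a\ge 0$, the set $\{b\in\mathbb{Z}_{\ge 0} : f(a,b)\le L\}$ consists of consecutive integers, i.e. if $b_1<b_2<b_3$ are nonnegative integers with $f(a,b_1)\le L$ and $f(a,b_3)\le L$, then $f(a,b_2)\le L$.
   Context: A machine processes jobs of two types, A and B, in batches. A schedule for the task-combination $(a,b)$ ($a$ A-jobs and $b$ B-jobs) is a finite sequence of batches, each batch being a nonempty group of jobs of a single type, such that any two consecutive batches in the sequence are of different types, and in total exactly $a$ A-jobs and $b$ B-jobs are processed. An A-batch of $x$ jobs takes $t^A+k^A x^2$ time units and a B-batch of $x$ jobs takes $t^B+k^B x^2$ time units; the time of a schedule is the sum of the times of its batches (the empty schedule, used for $(0,0)$, takes time $0$). $f(a,b)$ is the minimum time over all schedules for $(a,b)$. *)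

theory Defs
  imports Main "HOL.Real"
begin

datatype jobtype = A | B

type_synonym batch = "jobtype \<times> nat"

definition valid_schedule :: "batch list \<Rightarrow> bool" where
  "valid_schedule s \<longleftrightarrow>
     (\<forall>x \<in> set s. snd x > 0) \<and>
     (\<forall>i. Suc i < length s \<longrightarrow> fst (s ! i) \<noteq> fst (s ! Suc i))"

definition jobs_of :: "jobtype \<Rightarrow> batch list \<Rightarrow> nat" where
  "jobs_of T s = (\<Sum>x\<leftarrow>s. if fst x = T then snd x else 0)"

definition batch_time :: "real \<Rightarrow> real \<Rightarrow> real \<Rightarrow> real \<Rightarrow> batch \<Rightarrow> real" where
  "batch_time kA kB tA tB x =
     (case fst x of
        A \<Rightarrow> tA + kA * (real (snd x))^2
      | B \<Rightarrow> tB + kB * (real (snd x))^2)"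

definition sched_time :: "real \<Rightarrow> real \<Rightarrow> real \<Rightarrow> real \<Rightarrow> batch list \<Rightarrow> real" where
  "sched_time kA kB tA tB s = (\<Sum>x\<leftarrow>s. batch_time kA kB tA tB x)"

text \<open>Minimum processing time f(a,b) (the minimum exists: finitely many schedules, at least one).\<close>
definition fmin :: "real \<Rightarrow> real \<Rightarrow> real \<Rightarrow> real \<Rightarrow> nat \<Rightarrow> nat \<Rightarrow> real" where
  "fmin kA kB tA tB a b =
     Min {sched_time kA kB tA tB s | s. valid_schedule s \<and> jobs_of A s = a \<and> jobs_of B s = b}"

end

(* Let a schedule have p A-batches and q B-batches; alternation forces |p - q| <= 1.
   For integers x and m, x^2 >= (2m+1)x - m(m+1), with equality for x in {m, m+1}.  Hence the
   A-batches cost at least balanced_cost p, the cost of splitting the a jobs as evenly as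
   possible into p batches, and the B-batches cost at least q(t^B + k^B); both bounds are attained
   together by alternating an even split with singleton B-batches.  Moreover balanced_cost is a
   maximum of functions affine in p, hence convex.

   Take schedules for (a, b1) and (a, b3) of time at most L.  If the second has at most b2
   B-batches, shrinking its B-batches yields a cheaper schedule for (a, b2).  Otherwise its batch
   counts (p', q') satisfy q' > b2, and those (p, q) of the first satisfy q <= b1 < b2; the chord
   of the convex function balanced_cost between p and p' bounds its value at b2 + 1 (or p' itself
   is close enough to b2), which yields a schedule for (a, b2) of time at most L. *)

theory Submission
  imports Defs
begin

lemma discrete_convex_diff_mono:
  fixes h :: "nat \<Rightarrow> real"
  assumes convex: "\<And>n. lo < n \<Longrightarrow> n < hi \<Longrightarrow> 2 * h n \<le> h (n - 1) + h (n + 1)"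
    and "lo \<le> i" "i \<le> k" "k < hi"
  shows "h (i + 1) - h i \<le> h (k + 1) - h k"
  using \<open>i \<le> k\<close> \<open>k < hi\<close>
proof (induction k rule: dec_induct)
  case (step n)
  have "2 * h (Suc n) \<le> h n + h (Suc n + 1)"
    using convex[of "Suc n"] \<open>lo \<le> i\<close> step by simp
  then show ?case using step by simp
qed simp

lemma discrete_convex_above_line:
  fixes h :: "nat \<Rightarrow> real"
  assumes convex: "\<And>n. lo < n \<Longrightarrow> n < hi \<Longrightarrow> 2 * h n \<le> h (n - 1) + h (n + 1)"
    and "lo \<le> j" "j < hi" "lo \<le> x" "x \<le> hi"
  shows "h j + (real x - real j) * (h (j + 1) - h j) \<le> h x"
proof (cases "j \<le> x")
  case True
  then show ?thesis using \<open>x \<le> hi\<close>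
  proof (induction x rule: dec_induct)
    case (step n)
    then have "h (j + 1) - h j \<le> h (n + 1) - h n"
      using discrete_convex_diff_mono[OF convex] assms(2) by simp
    with step show ?case by (simp add: algebra_simps)
  qed simp
next
  case False
  then have "x \<le> j" by simp
  then show ?thesis
  proof (induction x rule: inc_induct)
    case (step n)
    then have "h (n + 1) - h n \<le> h (j + 1) - h j"
      using discrete_convex_diff_mono[OF convex] assms(3,4) by simp
    with step show ?case by (simp add: algebra_simps)
  qed simp
qed

lemma discrete_convex_below_chord:
  fixes h :: "nat \<Rightarrow> real"
  assumes convex: "\<And>n. lo < n \<Longrightarrow> n < hi \<Longrightarrow> 2 * h n \<le> h (n - 1) + h (n + 1)"
    and "lo \<le> x" "x \<le> y" "y \<le> z" "z \<le> hi"
  shows "(real z - real x) * h y \<le> (real z - real y) * h x + (real y - real x) * h z"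
proof (cases "y = z")
  case False
  define l where "l t = h y + (real t - real y) * (h (y + 1) - h y)" for t
  have "l x \<le> h x" "l z \<le> h z"
    unfolding l_def using discrete_convex_above_line[OF convex] assms False by simp_all
  have "(real z - real x) * h y = (real z - real y) * l x + (real y - real x) * l z"
    by (simp add: l_def algebra_simps)
  also have "\<dots> \<le> (real z - real y) * h x + (real y - real x) * h z"
    using \<open>l x \<le> h x\<close> \<open>l z \<le> h z\<close> assms by (intro add_mono mult_left_mono) auto
  finally show ?thesis .
qed (simp add: algebra_simps)

lemma discrete_convex_near_diagonal:
  fixes h :: "nat \<Rightarrow> real" and c L :: real
  assumes convex: "\<And>n. 1 < n \<Longrightarrow> n < a \<Longrightarrow> 2 * h n \<le> h (n - 1) + h (n + 1)"
    and "0 \<le> c" "1 \<le> p" "p' \<le> a"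
    and "p \<le> q + 1" "p' \<le> q' + 1" "q' \<le> p' + 1" "q < b" "b < q'"
    and "h p + real q * c \<le> L" "h p' + real q' * c \<le> L"
  obtains r where "0 < r" "r \<le> a" "r \<le> b + 1" "b \<le> r + 1" "h r + real b * c \<le> L"
proof (cases "p' \<le> b + 1")
  case True
  have "real b * c \<le> real q' * c" using \<open>b < q'\<close> \<open>0 \<le> c\<close> by (intro mult_right_mono) auto
  then show ?thesis using True assms by (intro that[of p']) auto
next
  case False
  define x y z where "x = real p" and "y = real b + 1" and "z = real p'"
  have "y \<le> z" "x \<le> y" "x < z" using False assms unfolding x_def y_def z_def by auto
  have "p \<le> b + 1" "b + 1 \<le> p'" using False assms by auto
  from discrete_convex_below_chord[OF convex \<open>1 \<le> p\<close> this \<open>p' \<le> a\<close>]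
  have "(z - x) * h (b + 1) \<le> (z - y) * h p + (y - x) * h p'"
    unfolding x_def y_def z_def by (simp add: add.commute)
  also have "\<dots> \<le> (z - y) * (L - real q * c) + (y - x) * (L - real q' * c)"
    using assms \<open>y \<le> z\<close> \<open>x \<le> y\<close> by (intro add_mono mult_left_mono) auto
  also have "\<dots> \<le> (z - x) * (L - real b * c)"
  proof -
    \<comment> \<open>interpolating q \<ge> p - 1 and q' \<ge> p' - 1 at b + 1 gives at least b\<close>
    have "(z - y) * (x - 1) \<le> (z - y) * real q" "(y - x) * (z - 1) \<le> (y - x) * real q'"
      using assms \<open>y \<le> z\<close> \<open>x \<le> y\<close> unfolding x_def z_def by (intro mult_left_mono; simp)+
    then have "(z - x) * real b \<le> (z - y) * real q + (y - x) * real q'"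
      unfolding y_def by (simp add: algebra_simps)
    then have "(z - x) * real b * c \<le> ((z - y) * real q + (y - x) * real q') * c"
      using \<open>0 \<le> c\<close> by (rule mult_right_mono)
    then show ?thesis by (simp add: algebra_simps)
  qed
  finally have "h (b + 1) \<le> L - real b * c"
    using \<open>x < z\<close> by (simp add: mult_le_cancel_left_pos)
  then show ?thesis using False assms by (intro that[of "b + 1"]) auto
qed

definition num_batches :: "jobtype \<Rightarrow> batch list \<Rightarrow> nat" where
  "num_batches T s = length (filter (\<lambda>x. fst x = T) s)"

lemma num_batches_simps [simp]:
  "num_batches T [] = 0"
  "num_batches T (x # s) = (if fst x = T then 1 else 0) + num_batches T s"
  by (simp_all add: num_batches_def)

lemma jobs_of_simps [simp]:
  "jobs_of T [] = 0"
  "jobs_of T (x # s) = (if fst x = T then snd x else 0) + jobs_of T s"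
  by (simp_all add: jobs_of_def)

lemma sched_time_simps [simp]:
  "sched_time kA kB tA tB [] = 0"
  "sched_time kA kB tA tB (x # s) = batch_time kA kB tA tB x + sched_time kA kB tA tB s"
  by (simp_all add: sched_time_def)

lemma jobs_of_append [simp]: "jobs_of T (xs @ ys) = jobs_of T xs + jobs_of T ys"
  by (simp add: jobs_of_def)

lemma sched_time_append [simp]:
  "sched_time kA kB tA tB (xs @ ys) = sched_time kA kB tA tB xs + sched_time kA kB tA tB ys"
  by (simp add: sched_time_def)

lemma jobs_of_replicate [simp]: "jobs_of T (replicate k x) = k * (if fst x = T then snd x else 0)"
  by (induction k) auto

lemma sched_time_replicate [simp]:
  "sched_time kA kB tA tB (replicate k x) = real k * batch_time kA kB tA tB x"
  by (induction k) (auto simp: algebra_simps)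

lemma valid_schedule_Nil [simp]: "valid_schedule []"
  by (simp add: valid_schedule_def)

lemma valid_schedule_Cons:
  "valid_schedule (x # s) \<longleftrightarrow>
     0 < snd x \<and> valid_schedule s \<and> (s \<noteq> [] \<longrightarrow> fst x \<noteq> fst (hd s))"
proof (cases s)
  case (Cons y s')
  then show ?thesis
    unfolding valid_schedule_def by (simp add: All_less_Suc2) blast
qed (simp add: valid_schedule_def)

lemma valid_schedule_pos: "valid_schedule s \<Longrightarrow> x \<in> set s \<Longrightarrow> 0 < snd x"
  by (simp add: valid_schedule_def)

lemma valid_schedule_map_fst:
  assumes "valid_schedule s" "map fst s' = map fst s" "\<forall>x\<in>set s'. 0 < snd x"
  shows "valid_schedule s'"
proof -
  have "length s' = length s" using assms(2) by (metis length_map)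
  moreover have "fst (s' ! i) = fst (s ! i)" if "i < length s" for i
    using assms(2) that by (metis \<open>length s' = length s\<close> nth_map)
  ultimately show ?thesis using assms(1,3) unfolding valid_schedule_def by auto
qed

lemma num_batches_le_jobs_of:
  "\<forall>x\<in>set s. 0 < snd x \<Longrightarrow> num_batches T s \<le> jobs_of T s"
  by (induction s) auto

lemma num_batches_pos:
  "\<forall>x\<in>set s. 0 < snd x \<Longrightarrow> 0 < jobs_of T s \<Longrightarrow> 0 < num_batches T s"
  by (induction s) (auto split: if_splits)

lemma num_batches_eq_if_map_fst_eq:
  assumes "map fst s' = map fst s"
  shows "num_batches T s' = num_batches T s"
proof -
  have "num_batches T s = length (filter ((=) T) (map fst s))" for s
    by (induction s) auto
  with assms show ?thesis by (metis (no_types))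
qed

lemma jobtype_eq_or_eq: "T\<^sub>1 \<noteq> T\<^sub>2 \<Longrightarrow> (T :: jobtype) = T\<^sub>1 \<or> T = T\<^sub>2"
  by (cases T; cases T\<^sub>1; cases T\<^sub>2) auto

lemma num_batches_head_type:
  assumes "valid_schedule (x # s)"
  shows "num_batches T (x # s) \<le> num_batches (fst x) (x # s)
    \<and> num_batches (fst x) (x # s) \<le> num_batches T (x # s) + 1"
  using assms
proof (induction s arbitrary: x T)
  case (Cons y s)
  then have "fst y \<noteq> fst x" "valid_schedule (y # s)" by (auto simp: valid_schedule_Cons)
  with Cons.IH[of y "fst x"] have
    "num_batches (fst x) (y # s) \<le> num_batches (fst y) (y # s)"
    "num_batches (fst y) (y # s) \<le> num_batches (fst x) (y # s) + 1"
    by auto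
  moreover have "T = fst x \<or> T = fst y" using jobtype_eq_or_eq \<open>fst y \<noteq> fst x\<close> by blast
  ultimately show ?case using \<open>fst y \<noteq> fst x\<close> by (elim disjE) simp_all
qed simp

lemma num_batches_alternate:
  assumes "valid_schedule s"
  shows "num_batches A s \<le> num_batches B s + 1" "num_batches B s \<le> num_batches A s + 1"
proof -
  have "num_batches A s \<le> num_batches B s + 1 \<and> num_batches B s \<le> num_batches A s + 1"
  proof (cases s)
    case (Cons x s')
    with assms show ?thesis
      using num_batches_head_type[of x s' A] num_batches_head_type[of x s' B] by (cases "fst x") auto
  qed simp
  then show "num_batches A s \<le> num_batches B s + 1" "num_batches B s \<le> num_batches A s + 1"
    by auto
qed

lemma finite_schedules:
  "finite {s. valid_schedule s \<and> jobs_of A s = a \<and> jobs_of B s = b}"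
proof (rule finite_subset)
  have "(UNIV :: jobtype set) = {A, B}" using jobtype.exhaust by auto
  then have "finite (UNIV :: jobtype set)" by (metis finite.emptyI finite.insertI)
  then show "finite {s :: batch list. set s \<subseteq> UNIV \<times> {..a + b} \<and> length s \<le> a + b}"
    by (intro finite_lists_length_le finite_SigmaI) simp_all
  show "{s. valid_schedule s \<and> jobs_of A s = a \<and> jobs_of B s = b}
          \<subseteq> {s. set s \<subseteq> UNIV \<times> {..a + b} \<and> length s \<le> a + b}"
  proof
    fix s assume "s \<in> {s. valid_schedule s \<and> jobs_of A s = a \<and> jobs_of B s = b}"
    then have s: "valid_schedule s" "jobs_of A s = a" "jobs_of B s = b" by auto
    have pos: "\<forall>x\<in>set s. 0 < snd x" using s(1) valid_schedule_pos by blast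
    have "length s = num_batches A s + num_batches B s"
    proof (induction s)
      case (Cons x s)
      then show ?case by (cases "fst x") auto
    qed simp
    then have "length s \<le> a + b"
      using num_batches_le_jobs_of[OF pos, of A] num_batches_le_jobs_of[OF pos, of B] s by linarith
    moreover have "set s \<subseteq> UNIV \<times> {..a + b}"
    proof
      fix x assume "x \<in> set s"
      then have "snd x \<le> jobs_of (fst x) s" by (induction s) auto
      then show "x \<in> UNIV \<times> {..a + b}" using s by (cases x; cases "fst x") auto
    qed
    ultimately show "s \<in> {s. set s \<subseteq> UNIV \<times> {..a + b} \<and> length s \<le> a + b}" by blast
  qed
qed

lemma finite_sched_times:
  "finite {sched_time kA kB tA tB s | s. valid_schedule s \<and> jobs_of A s = a \<and> jobs_of B s = b}"
  using finite_imageI[OF finite_schedules, of "sched_time kA kB tA tB"] by (simp add: image_Collect)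

lemma fmin_le_sched_time:
  "valid_schedule s \<Longrightarrow> fmin kA kB tA tB (jobs_of A s) (jobs_of B s) \<le> sched_time kA kB tA tB s"
  unfolding fmin_def by (rule Min_le[OF finite_sched_times]) blast

lemma fmin_attained:
  obtains s where "valid_schedule s" "jobs_of A s = a" "jobs_of B s = b"
    "sched_time kA kB tA tB s = fmin kA kB tA tB a b"
proof -
  let ?s = "(if 0 < a then [(A, a)] else []) @ (if 0 < b then [(B, b)] else [])"
  have "valid_schedule ?s" by (auto simp: valid_schedule_Cons)
  moreover have "jobs_of A ?s = a" "jobs_of B ?s = b" by auto
  ultimately have "{sched_time kA kB tA tB s | s. valid_schedule s \<and> jobs_of A s = a \<and> jobs_of B s = b} \<noteq> {}"
    by blast
  from Min_in[OF finite_sched_times this] obtain s where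
    "valid_schedule s" "jobs_of A s = a" "jobs_of B s = b"
    "sched_time kA kB tA tB s = fmin kA kB tA tB a b"
    unfolding fmin_def by auto
  then show ?thesis by (rule that)
qed

(* The secant bound x^2 >= (2m+1)x - m(m+1), summed over p A-batches holding a jobs. *)
definition secant_cost :: "real \<Rightarrow> real \<Rightarrow> nat \<Rightarrow> nat \<Rightarrow> nat \<Rightarrow> real" where
  "secant_cost kA tA a m p = real p * tA + kA * ((2 * real m + 1) * real a - real p * real m * (real m + 1))"

lemma square_ge_secant: "(2 * real m + 1) * real x - real m * (real m + 1) \<le> (real x)\<^sup>2"
proof -
  have "0 \<le> (real x - real m) * (real x - real m - 1)"
    by (cases "x \<le> m") (auto intro: mult_nonpos_nonpos mult_nonneg_nonneg)
  then show ?thesis by (simp add: algebra_simps power2_eq_square)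
qed

lemma secant_cost_le_sched_time:
  assumes "0 \<le> kA" "0 \<le> kB" "\<forall>x\<in>set s. 0 < snd x"
  shows "secant_cost kA tA (jobs_of A s) m (num_batches A s) + real (num_batches B s) * (tB + kB)
           \<le> sched_time kA kB tA tB s"
  using assms(3)
proof (induction s)
  case (Cons x s)
  obtain T n where x: "x = (T, n)" and "0 < n" using Cons.prems by (cases x) auto
  have "secant_cost kA tA (jobs_of A s) m (num_batches A s) + real (num_batches B s) * (tB + kB)
          \<le> sched_time kA kB tA tB s"
    using Cons by auto
  moreover have "kA * ((2 * real m + 1) * real n - real m * (real m + 1)) \<le> kA * (real n)\<^sup>2"
    using square_ge_secant assms(1) by (rule mult_left_mono)
  moreover have "kB \<le> kB * (real n)\<^sup>2"
    using \<open>0 < n\<close> assms(2) by (simp add: mult_le_cancel_left1 one_le_power)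
  ultimately show ?case
    by (cases T) (auto simp: x secant_cost_def batch_time_def algebra_simps)
qed (simp add: secant_cost_def)

definition balanced_split :: "nat \<Rightarrow> nat \<Rightarrow> batch list" where
  "balanced_split a p = replicate (a mod p) (A, a div p + 1) @ replicate (p - a mod p) (A, a div p)"

definition balanced_cost :: "real \<Rightarrow> real \<Rightarrow> nat \<Rightarrow> nat \<Rightarrow> real" where
  "balanced_cost kA tA a p = secant_cost kA tA a (a div p) p"

lemma balanced_split_batches:
  assumes "0 < p" "p \<le> a" "x \<in> set (balanced_split a p)"
  shows "fst x = A" "0 < snd x"
proof -
  have "0 < a div p" using assms(1,2) by (simp add: div_greater_zero_iff)
  then show "fst x = A" "0 < snd x" using assms(3) by (auto simp: balanced_split_def)
qed

lemma length_balanced_split: "0 < p \<Longrightarrow> length (balanced_split a p) = p"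
  by (simp add: balanced_split_def)

lemma jobs_of_balanced_split: "0 < p \<Longrightarrow> jobs_of A (balanced_split a p) = a"
proof -
  assume "0 < p"
  then have "a mod p \<le> p" by simp
  then have "a mod p * (a div p + 1) + (p - a mod p) * (a div p) = p * (a div p) + a mod p"
    by (simp add: diff_mult_distrib algebra_simps)
  then show ?thesis by (simp add: balanced_split_def)
qed

lemma sched_time_balanced_split:
  assumes "0 < p"
  shows "sched_time kA kB tA tB (balanced_split a p) = balanced_cost kA tA a p"
proof -
  define m where "m = a div p"
  define r where "r = a mod p"
  have "r < p" using assms by (simp add: r_def)
  then have "real (p - r) = real p - real r" by simp
  moreover have "real a = real p * real m + real r"
    by (simp add: m_def r_def flip: of_nat_mult of_nat_add)
  ultimately show ?thesis
    unfolding balanced_split_def balanced_cost_def secant_cost_def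
    by (simp add: batch_time_def flip: m_def r_def) (simp add: algebra_simps power2_eq_square)
qed

lemma num_batches_balanced_split:
  assumes "0 < p" "p \<le> a"
  shows "num_batches A (balanced_split a p) = p" "num_batches B (balanced_split a p) = 0"
  using balanced_split_batches[OF assms] length_balanced_split[OF assms(1)]
  by (simp_all add: num_batches_def filter_id_conv filter_empty_conv)

lemma secant_cost_le_balanced_cost:
  assumes "0 \<le> kA" "0 < p" "p \<le> a"
  shows "secant_cost kA tA a m p \<le> balanced_cost kA tA a p"
  using secant_cost_le_sched_time[OF assms(1) order.refl, where s = "balanced_split a p" and m = m and tA = tA]
    balanced_split_batches[OF assms(2,3)]
  by (simp add: num_batches_balanced_split[OF assms(2,3)] jobs_of_balanced_split[OF assms(2)]
      sched_time_balanced_split[OF assms(2)])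

lemma balanced_cost_convex:
  assumes "0 \<le> kA" "1 < p" "p < a"
  shows "2 * balanced_cost kA tA a p \<le> balanced_cost kA tA a (p - 1) + balanced_cost kA tA a (p + 1)"
proof -
  \<comment> \<open>secant_cost is affine in p and bounded by balanced_cost, with equality at m = a div p\<close>
  let ?m = "a div p"
  have "2 * balanced_cost kA tA a p = secant_cost kA tA a ?m (p - 1) + secant_cost kA tA a ?m (p + 1)"
    using assms(2) by (simp add: balanced_cost_def secant_cost_def of_nat_diff algebra_simps)
  also have "\<dots> \<le> balanced_cost kA tA a (p - 1) + balanced_cost kA tA a (p + 1)"
    using assms by (intro add_mono secant_cost_le_balanced_cost) auto
  finally show ?thesis .
qed

lemma balanced_cost_le_sched_time:
  assumes "0 \<le> kA" "0 \<le> kB" "valid_schedule s"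
  shows "balanced_cost kA tA (jobs_of A s) (num_batches A s) + real (num_batches B s) * (tB + kB)
           \<le> sched_time kA kB tA tB s"
  unfolding balanced_cost_def
  using secant_cost_le_sched_time assms valid_schedule_pos by blast

function interleave :: "'a list \<Rightarrow> 'a list \<Rightarrow> 'a list" where
  "interleave [] ys = ys"
| "interleave (x # xs) ys = x # interleave ys xs"
  by pat_completeness auto
termination by (relation "measure (\<lambda>(xs, ys). length xs + length ys)") auto

lemma jobs_of_interleave [simp]: "jobs_of T (interleave xs ys) = jobs_of T xs + jobs_of T ys"
  by (induction xs ys rule: interleave.induct) auto

lemma sched_time_interleave [simp]:
  "sched_time kA kB tA tB (interleave xs ys) = sched_time kA kB tA tB xs + sched_time kA kB tA tB ys"
  by (induction xs ys rule: interleave.induct) auto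

lemma valid_schedule_interleave:
  assumes "\<forall>x\<in>set xs. fst x = T \<and> 0 < snd x" "\<forall>y\<in>set ys. fst y = T' \<and> 0 < snd y" "T \<noteq> T'"
    and "length ys \<le> length xs" "length xs \<le> length ys + 1"
  shows "valid_schedule (interleave xs ys)"
  using assms
proof (induction xs ys arbitrary: T T' rule: interleave.induct)
  case (2 x xs ys)
  then have "valid_schedule (interleave ys xs)" by auto
  moreover have "fst x \<noteq> fst (hd (interleave ys xs))" if "interleave ys xs \<noteq> []"
    using 2 that by (cases ys) auto
  ultimately show ?case using "2.prems"(1) by (auto simp: valid_schedule_Cons)
qed auto

lemma fmin_le_balanced_cost:
  assumes "0 < p" "p \<le> a" "0 < q" "p \<le> q + 1" "q \<le> p + 1"
  shows "fmin kA kB tA tB a q \<le> balanced_cost kA tA a p + real q * (tB + kB)"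
proof -
  let ?As = "balanced_split a p" and ?Bs = "replicate q (B, 1)"
  define s where "s = (if p < q then interleave ?Bs ?As else interleave ?As ?Bs)"
  have As: "\<forall>x\<in>set ?As. fst x = A \<and> 0 < snd x" and "length ?As = p"
    using balanced_split_batches[OF assms(1,2)] length_balanced_split[OF assms(1)] by auto
  then have "valid_schedule s"
    using assms(4,5) unfolding s_def
    by (cases "p < q") (auto intro: valid_schedule_interleave[where T = A and T' = B]
                                    valid_schedule_interleave[where T = B and T' = A])
  moreover have "jobs_of B ?As = 0" by (simp add: balanced_split_def)
  then have "jobs_of A s = a" "jobs_of B s = q"
    by (simp_all add: s_def jobs_of_balanced_split[OF assms(1)])
  moreover have "sched_time kA kB tA tB s = balanced_cost kA tA a p + real q * (tB + kB)"
    by (simp add: s_def sched_time_balanced_split[OF assms(1)] batch_time_def)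
  ultimately show ?thesis using fmin_le_sched_time by metis
qed

lemma shrink_B_batch:
  assumes "0 \<le> kB" "\<forall>x\<in>set s. 0 < snd x" "num_batches B s < jobs_of B s"
  shows "\<exists>s'. map fst s' = map fst s \<and> (\<forall>x\<in>set s'. 0 < snd x) \<and>
    jobs_of A s' = jobs_of A s \<and> Suc (jobs_of B s') = jobs_of B s \<and>
    sched_time kA kB tA tB s' \<le> sched_time kA kB tA tB s"
  using assms(2,3)
proof (induction s)
  case (Cons x s)
  obtain T n where x: "x = (T, n)" and "0 < n" using Cons.prems(1) by (cases x) auto
  show ?case
  proof (cases "T = B \<and> 2 \<le> n")
    case True
    have "kB * (real (n - 1))\<^sup>2 \<le> kB * (real n)\<^sup>2"
      using assms(1) by (intro mult_left_mono power_mono) auto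
    then have "batch_time kA kB tA tB (B, n - 1) \<le> batch_time kA kB tA tB x"
      using True x by (simp add: batch_time_def)
    moreover have "Suc (jobs_of B ((B, n - 1) # s)) = jobs_of B (x # s)" using True x by simp
    ultimately show ?thesis
      using True Cons.prems(1) x by (intro exI[of _ "(B, n - 1) # s"]) simp
  next
    case False
    then have "num_batches B s < jobs_of B s"
      using Cons.prems(2) x \<open>0 < n\<close> by (cases T) auto
    moreover have "\<forall>x\<in>set s. 0 < snd x" using Cons.prems(1) by simp
    ultimately obtain s' where s': "map fst s' = map fst s" "\<forall>x\<in>set s'. 0 < snd x"
      "jobs_of A s' = jobs_of A s" "Suc (jobs_of B s') = jobs_of B s"
      "sched_time kA kB tA tB s' \<le> sched_time kA kB tA tB s"
      using Cons.IH by blast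
    have "0 < snd x" using Cons.prems(1) by simp
    with s' show ?thesis by (intro exI[of _ "x # s'"]) simp
  qed
qed simp

lemma fmin_le_shrunk_B_batches:
  assumes "0 \<le> kB" "valid_schedule s" "num_batches B s \<le> b" "b \<le> jobs_of B s"
  shows "fmin kA kB tA tB (jobs_of A s) b \<le> sched_time kA kB tA tB s"
  using assms(2-4)
proof (induction "jobs_of B s - b" arbitrary: s)
  case 0
  then show ?case using fmin_le_sched_time[OF \<open>valid_schedule s\<close>] by simp
next
  case (Suc d)
  have pos: "\<forall>x\<in>set s. 0 < snd x" using Suc.prems(1) valid_schedule_pos by blast
  have "num_batches B s < jobs_of B s" using Suc.hyps(2) Suc.prems(2) by linarith
  then obtain s' where s': "map fst s' = map fst s" "\<forall>x\<in>set s'. 0 < snd x"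
    "jobs_of A s' = jobs_of A s" "Suc (jobs_of B s') = jobs_of B s"
    "sched_time kA kB tA tB s' \<le> sched_time kA kB tA tB s"
    using shrink_B_batch[OF assms(1) pos] by blast
  have "valid_schedule s'" using valid_schedule_map_fst[OF Suc.prems(1) s'(1,2)] .
  moreover have "num_batches B s' \<le> b"
    using num_batches_eq_if_map_fst_eq[OF s'(1)] Suc.prems(2) by simp
  moreover have "d = jobs_of B s' - b" "b \<le> jobs_of B s'" using Suc.hyps(2) s'(4) by linarith+
  ultimately have "fmin kA kB tA tB (jobs_of A s') b \<le> sched_time kA kB tA tB s'"
    using Suc.hyps(1) by blast
  then show ?case using s'(3,5) by simp
qed

lemma fmin_le_between_schedules:
  assumes "0 \<le> kA" "0 \<le> kB" "0 \<le> tB"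
    and "valid_schedule s" "jobs_of A s = a" "jobs_of B s < b" "sched_time kA kB tA tB s \<le> L"
    and "valid_schedule s'" "jobs_of A s' = a" "b < num_batches B s'" "sched_time kA kB tA tB s' \<le> L"
  shows "fmin kA kB tA tB a b \<le> L"
proof -
  have pos: "\<forall>x\<in>set s. 0 < snd x" "\<forall>x\<in>set s'. 0 < snd x"
    using assms(4,8) valid_schedule_pos by blast+
  have "0 < a"
    using num_batches_le_jobs_of[OF pos(2), of A] num_batches_alternate[OF assms(8)] assms(6,9,10)
    by linarith
  then have "1 \<le> num_batches A s" using num_batches_pos[OF pos(1)] assms(5) by (simp add: Suc_le_eq)
  obtain p where p: "0 < p" "p \<le> a" "p \<le> b + 1" "b \<le> p + 1"
    "balanced_cost kA tA a p + real b * (tB + kB) \<le> L"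
  proof (rule discrete_convex_near_diagonal[where h = "balanced_cost kA tA a" and c = "tB + kB"
        and p = "num_batches A s" and q = "num_batches B s"
        and p' = "num_batches A s'" and q' = "num_batches B s'" and b = b and L = L and a = a])
    show "2 * balanced_cost kA tA a n \<le> balanced_cost kA tA a (n - 1) + balanced_cost kA tA a (n + 1)"
      if "1 < n" "n < a" for n
      using balanced_cost_convex[OF assms(1) that] .
    show "num_batches A s' \<le> a"
      using num_batches_le_jobs_of[OF pos(2)] assms(9) by metis
    show "num_batches B s < b"
      using num_batches_le_jobs_of[OF pos(1), of B] assms(6) by linarith
    show "balanced_cost kA tA a (num_batches A s) + real (num_batches B s) * (tB + kB) \<le> L"
      using balanced_cost_le_sched_time[OF assms(1,2,4)] assms(5,7) by (metis order.trans)
    show "balanced_cost kA tA a (num_batches A s') + real (num_batches B s') * (tB + kB) \<le> L"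
      using balanced_cost_le_sched_time[OF assms(1,2,8)] assms(9,11) by (metis order.trans)
  qed (use \<open>1 \<le> num_batches A s\<close> num_batches_alternate[OF assms(4)]
        num_batches_alternate[OF assms(8)] assms(2,3,10) in auto)
  then show ?thesis
    using fmin_le_balanced_cost[of p a b kA kB tA tB] assms(6) by simp
qed

theorem theorem1:
  fixes kA kB tA tB L :: real and a b1 b2 b3 :: nat
  assumes "kA \<ge> 0" "kB \<ge> 0" "tA \<ge> 0" "tB \<ge> 0"
    and "b1 < b2" "b2 < b3"
    and "fmin kA kB tA tB a b1 \<le> L" "fmin kA kB tA tB a b3 \<le> L"
  shows "fmin kA kB tA tB a b2 \<le> L"
proof -
  obtain s1 where s1: "valid_schedule s1" "jobs_of A s1 = a" "jobs_of B s1 = b1"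
    "sched_time kA kB tA tB s1 \<le> L"
    using fmin_attained[of a b1 kA kB tA tB] assms(7) by metis
  obtain s3 where s3: "valid_schedule s3" "jobs_of A s3 = a" "jobs_of B s3 = b3"
    "sched_time kA kB tA tB s3 \<le> L"
    using fmin_attained[of a b3 kA kB tA tB] assms(8) by metis
  show ?thesis
  proof (cases "num_batches B s3 \<le> b2")
    case True
    then show ?thesis
      using fmin_le_shrunk_B_batches[OF assms(2) s3(1) True, of kA tA tB] s3 assms(6) by simp
  next
    case False
    then show ?thesis
      using fmin_le_between_schedules[OF assms(1,2,4) s1(1,2) _ s1(4) s3(1,2) _ s3(4)] s1(3) assms(5)
      by simp
  qed
qed

end
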